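(* Fix $p\in[0,\infty]$, a dynamic monetary risk measure $(R_t)_{t=0}^{T-1}$, a dynamic monetary utility function $(U_t)_{t=0}^{T-1}$ and $\eta_t\in L^0(\mathcal{F}_t)$, $\eta_t>0$; let $W_t$ and the cost-of-capital margins $V_t$ be as defined in the context. Let $X,\widetilde X$ be $\mathbb{F}$-adapted cash flows with $X_s,\widetilde X_s\in L^p(\mathcal{F}_s)$ for every $s$. (i) Let $t<T$, $a\in L^p_+(\mathcal{F}_t)$, let $b=(b_1,\dots,b_T)$ be a vector with components in $L^p(\mathcal{F}_t)$, and suppose $X_u\le\widetilde X_u$ for each $u$. Then $$V_t(aX)=aV_t(X),\qquad V_t(X+b)=V_t(X)+\sum_{u=t+1}^T b_u,\qquad V_t(X)\le V_t(\widetilde X).$$ (ii) (Time consistency) For every pair of times $s\le t$, if $(X_u)_{u=1}^t=(\widetilde X_u)_{u=1}^t$ and $V_t(X)\le V_t(\widetilde X)$, then $V_s(X)\le V_s(\widetilde X)$.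
   Context: Let $T\ge 1$ and $(\Omega,\mathcal{F},\mathbb{F},\mathbb{P})$ a filtered probability space with $\mathbb{F}=(\mathcal{F}_t)_{t=0}^T$, $\{\emptyset,\Omega\}=\mathcal{F}_0\subseteq\dots\subseteq\mathcal{F}_T=\mathcal{F}$. $L^0(\mathcal{F}_t)$: real $\mathcal{F}_t$-measurable random variables; $L^p(\mathcal{F}_t)$ for $p\in(0,\infty)$: those with $\mathbb{E}|Y|^p<\infty$; $L^\infty(\mathcal{F}_t)$: essentially bounded ones; $L^p_+$: nonnegative elements. (In)equalities are a.s.; $x_+=\max(x,0)$. A dynamic monetary risk measure: maps $R_t:L^p(\mathcal{F}_{t+1})\to L^p(\mathcal{F}_t)$, $t=0,\dots,T-1$, with $R_t(Y+\lambda)=R_t(Y)-\lambda$ ($\lambda\in L^p(\mathcal{F}_t)$), $Y\le\widetilde Y\Rightarrow R_t(Y)\ge R_t(\widetilde Y)$, $R_t(cY)=cR_t(Y)$ ($c\in L^p_+(\mathcal{F}_t)$). A dynamic monetary utility function: maps $U_t:L^p(\mathcal{F}_{t+1})\to L^p(\mathcal{F}_t)$ with $U_t(Y+\lambda)=U_t(Y)+\lambda$, $Y\le\widetilde Y\Rightarrow U_t(Y)\le U_t(\widetilde Y)$, $U_t(cY)=cU_t(Y)$. Define $W_t(Y):=R_t(-Y)-\frac{1}{1+\eta_t}U_t((R_t(-Y)-Y)_+)$ for $Y\in L^p(\mathcal{F}_{t+1})$, and for an adapted cash flow $X=(X_t)_{t=1}^T$ with $X_t\in L^p(\mathcal{F}_t)$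 the cost-of-capital margins $V_t(X):=W_t\circ\dots\circ W_{T-1}(X_{t+1}+\dots+X_T)$ for $t=0,\dots,T-1$ and $V_T(X):=0$. Here $aX=(aX_u)_u$ and $X+b=(X_u+b_u)_u$. *)

theory Defs
  imports "HOL-Probability.Probability"
begin

definition finite_filtration :: "'a measure \<Rightarrow> (nat \<Rightarrow> 'a measure) \<Rightarrow> nat \<Rightarrow> bool" where
  "finite_filtration M F T \<longleftrightarrow>
     (\<forall>t\<le>T. space (F t) = space M \<and> sets (F t) \<subseteq> sets M) \<and>
     (\<forall>s t. s \<le> t \<and> t \<le> T \<longrightarrow> sets (F s) \<subseteq> sets (F t)) \<and>
     sets (F 0) = {{}, space M} \<and>
     sets (F T) = sets M"

definition Lp :: "'a measure \<Rightarrow> 'a measure \<Rightarrow> ennreal \<Rightarrow> ('a \<Rightarrow> real) set" where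
  "Lp M N p = {Y. Y \<in> borel_measurable N \<and>
     (if p = 0 then True
      else if p = \<infinity> then (\<exists>C. AE x in M. \<bar>Y x\<bar> \<le> C)
      else integrable M (\<lambda>x. \<bar>Y x\<bar> powr enn2real p))}"

definition Lp_pos :: "'a measure \<Rightarrow> 'a measure \<Rightarrow> ennreal \<Rightarrow> ('a \<Rightarrow> real) set" where
  "Lp_pos M N p = {Y. Y \<in> Lp M N p \<and> (AE x in M. 0 \<le> Y x)}"

text \<open>Positive homogeneity is required whenever
  the product c*Y is again in L^p(F(t+1)) (so that R t (c*Y) is defined).\<close>
definition dyn_risk_measure ::
  "'a measure \<Rightarrow> (nat \<Rightarrow> 'a measure) \<Rightarrow> nat \<Rightarrow> ennreal \<Rightarrow>
   (nat \<Rightarrow> ('a \<Rightarrow> real) \<Rightarrow> ('a \<Rightarrow> real)) \<Rightarrow> bool" where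
  "dyn_risk_measure M F T p R \<longleftrightarrow> (\<forall>t<T.
     (\<forall>Y\<in>Lp M (F (Suc t)) p. R t Y \<in> Lp M (F t) p) \<and>
     (\<forall>Y\<in>Lp M (F (Suc t)) p. \<forall>l\<in>Lp M (F t) p.
        AE x in M. R t (\<lambda>y. Y y + l y) x = R t Y x - l x) \<and>
     (\<forall>Y\<in>Lp M (F (Suc t)) p. \<forall>Y'\<in>Lp M (F (Suc t)) p.
        (AE x in M. Y x \<le> Y' x) \<longrightarrow> (AE x in M. R t Y x \<ge> R t Y' x)) \<and>
     (\<forall>Y\<in>Lp M (F (Suc t)) p. \<forall>c\<in>Lp_pos M (F t) p.
        (\<lambda>y. c y * Y y) \<in> Lp M (F (Suc t)) p \<longrightarrow>
        (AE x in M. R t (\<lambda>y. c y * Y y) x = c x * R t Y x)))"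

definition dyn_utility ::
  "'a measure \<Rightarrow> (nat \<Rightarrow> 'a measure) \<Rightarrow> nat \<Rightarrow> ennreal \<Rightarrow>
   (nat \<Rightarrow> ('a \<Rightarrow> real) \<Rightarrow> ('a \<Rightarrow> real)) \<Rightarrow> bool" where
  "dyn_utility M F T p U \<longleftrightarrow> (\<forall>t<T.
     (\<forall>Y\<in>Lp M (F (Suc t)) p. U t Y \<in> Lp M (F t) p) \<and>
     (\<forall>Y\<in>Lp M (F (Suc t)) p. \<forall>l\<in>Lp M (F t) p.
        AE x in M. U t (\<lambda>y. Y y + l y) x = U t Y x + l x) \<and>
     (\<forall>Y\<in>Lp M (F (Suc t)) p. \<forall>Y'\<in>Lp M (F (Suc t)) p.
        (AE x in M. Y x \<le> Y' x) \<longrightarrow> (AE x in M. U t Y x \<le> U t Y' x)) \<and>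
     (\<forall>Y\<in>Lp M (F (Suc t)) p. \<forall>c\<in>Lp_pos M (F t) p.
        (\<lambda>y. c y * Y y) \<in> Lp M (F (Suc t)) p \<longrightarrow>
        (AE x in M. U t (\<lambda>y. c y * Y y) x = c x * U t Y x)))"

definition CoC_W ::
  "(nat \<Rightarrow> ('a \<Rightarrow> real) \<Rightarrow> ('a \<Rightarrow> real)) \<Rightarrow> (nat \<Rightarrow> ('a \<Rightarrow> real) \<Rightarrow> ('a \<Rightarrow> real)) \<Rightarrow>
   (nat \<Rightarrow> 'a \<Rightarrow> real) \<Rightarrow> nat \<Rightarrow> ('a \<Rightarrow> real) \<Rightarrow> ('a \<Rightarrow> real)" where
  "CoC_W R U \<eta> t Y = (\<lambda>x. R t (\<lambda>y. - Y y) x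
      - 1 / (1 + \<eta> t x) * U t (\<lambda>y. max (R t (\<lambda>z. - Y z) y - Y y) 0) x)"

text \<open>V_t(X) = W_t \<circ> ... \<circ> W_{T-1}(X_{t+1} + ... + X_T); for t = T this is the empty
  composition applied to the empty sum, i.e. V_T(X) = 0.\<close>
definition CoC_V ::
  "(nat \<Rightarrow> ('a \<Rightarrow> real) \<Rightarrow> ('a \<Rightarrow> real)) \<Rightarrow> (nat \<Rightarrow> ('a \<Rightarrow> real) \<Rightarrow> ('a \<Rightarrow> real)) \<Rightarrow>
   (nat \<Rightarrow> 'a \<Rightarrow> real) \<Rightarrow> nat \<Rightarrow> (nat \<Rightarrow> 'a \<Rightarrow> real) \<Rightarrow> nat \<Rightarrow> ('a \<Rightarrow> real)" where
  "CoC_V R U \<eta> T X t =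
     foldr (CoC_W R U \<eta>) [t..<T] (\<lambda>x. \<Sum>u\<in>{Suc t..T}. X u x)"

end

(*
  The one-period map W_t inherits translation invariance, positive homogeneity and
  monotonicity from R_t and U_t. Monotonicity is the only delicate one, because the
  U_t-term of W_t(Y) decreases in Y; it is saved by the factor 1/(1 + eta_t) <= 1.
  Iterating W_t preserves these properties, which gives (i), and since W_s is monotone,
  time consistency follows by backward induction from V_s(X) = W_s(V_{s+1}(X) + X_{s+1}).
*)

theory Submission
  imports Defs
begin

lemma abs_add_powr_le:
  fixes a b r :: real
  assumes "0 \<le> r"
  shows "\<bar>a + b\<bar> powr r \<le> 2 powr r * (\<bar>a\<bar> powr r + \<bar>b\<bar> powr r)"
proof -
  define m where "m = max \<bar>a\<bar> \<bar>b\<bar>"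
  have "\<bar>a + b\<bar> powr r \<le> (2 * m) powr r"
    by (rule powr_mono2[OF assms]) (auto simp: m_def)
  also have "\<dots> = 2 powr r * m powr r"
    by (simp add: powr_mult m_def)
  also have "m powr r \<le> \<bar>a\<bar> powr r + \<bar>b\<bar> powr r"
    by (auto simp: m_def max_def)
  finally show ?thesis
    by simp
qed

lemma Lp_measurable [measurable_dest]: "Y \<in> Lp M N p \<Longrightarrow> Y \<in> borel_measurable N"
  unfolding Lp_def by auto

lemma Lp_zero: "(\<lambda>x. 0) \<in> Lp M N p"
  unfolding Lp_def by auto

lemma Lp_uminus: "Y \<in> Lp M N p \<Longrightarrow> (\<lambda>x. - Y x) \<in> Lp M N p"
  unfolding Lp_def by auto

lemma Lp_subalgebra_mono: "subalgebra N' N \<Longrightarrow> Y \<in> Lp M N p \<Longrightarrow> Y \<in> Lp M N' p"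
  unfolding Lp_def using measurable_from_subalg by blast

lemma Lp_dominated:
  assumes N: "subalgebra M N" and Z: "Z \<in> borel_measurable N" and Y: "Y \<in> Lp M N p"
    and dom: "AE x in M. \<bar>Z x\<bar> \<le> \<bar>Y x\<bar>"
  shows "Z \<in> Lp M N p"
proof -
  consider "p = 0" | "p = \<infinity>" | "p \<noteq> 0" "p \<noteq> \<infinity>" by blast
  then show ?thesis
  proof cases
    case 1
    then show ?thesis using Z unfolding Lp_def by auto
  next
    case 2
    then obtain C where "AE x in M. \<bar>Y x\<bar> \<le> C" using Y unfolding Lp_def by auto
    with dom have "AE x in M. \<bar>Z x\<bar> \<le> C" by eventually_elim auto
    then show ?thesis using Z 2 unfolding Lp_def by auto
  next
    case 3
    let ?r = "enn2real p"
    have "integrable M (\<lambda>x. \<bar>Y x\<bar> powr ?r)" using Y 3 unfolding Lp_def by auto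
    then have "integrable M (\<lambda>x. \<bar>Z x\<bar> powr ?r)"
    proof (rule Bochner_Integration.integrable_bound)
      show "(\<lambda>x. \<bar>Z x\<bar> powr ?r) \<in> borel_measurable M"
        using measurable_from_subalg[OF N Z] by measurable
    qed (use dom in \<open>auto elim!: eventually_mono intro: powr_mono2\<close>)
    then show ?thesis using Z 3 unfolding Lp_def by auto
  qed
qed

lemma Lp_AE_cong:
  "subalgebra M N \<Longrightarrow> Z \<in> borel_measurable N \<Longrightarrow> Y \<in> Lp M N p \<Longrightarrow> AE x in M. Z x = Y x
    \<Longrightarrow> Z \<in> Lp M N p"
  by (erule Lp_dominated) (auto elim!: eventually_mono)

lemma Lp_add:
  assumes N: "subalgebra M N" and Y: "Y \<in> Lp M N p" and Z: "Z \<in> Lp M N p"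
  shows "(\<lambda>x. Y x + Z x) \<in> Lp M N p"
proof -
  have YZ: "(\<lambda>x. Y x + Z x) \<in> borel_measurable N" using Y Z by measurable
  consider "p = 0" | "p = \<infinity>" | "p \<noteq> 0" "p \<noteq> \<infinity>" by blast
  then show ?thesis
  proof cases
    case 1
    then show ?thesis using YZ unfolding Lp_def by auto
  next
    case 2
    then obtain C D where "AE x in M. \<bar>Y x\<bar> \<le> C" "AE x in M. \<bar>Z x\<bar> \<le> D"
      using Y Z unfolding Lp_def by auto
    then have "AE x in M. \<bar>Y x + Z x\<bar> \<le> C + D" by eventually_elim auto
    then show ?thesis using YZ 2 unfolding Lp_def by auto
  next
    case 3
    let ?r = "enn2real p"
    have "integrable M (\<lambda>x. 2 powr ?r * (\<bar>Y x\<bar> powr ?r + \<bar>Z x\<bar> powr ?r))"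
      using Y Z 3 unfolding Lp_def by auto
    then have "integrable M (\<lambda>x. \<bar>Y x + Z x\<bar> powr ?r)"
    proof (rule Bochner_Integration.integrable_bound)
      show "(\<lambda>x. \<bar>Y x + Z x\<bar> powr ?r) \<in> borel_measurable M"
        using measurable_from_subalg[OF N YZ] by measurable
    qed (simp add: abs_add_powr_le)
    then show ?thesis using YZ 3 unfolding Lp_def by auto
  qed
qed

lemma Lp_diff:
  "subalgebra M N \<Longrightarrow> Y \<in> Lp M N p \<Longrightarrow> Z \<in> Lp M N p \<Longrightarrow> (\<lambda>x. Y x - Z x) \<in> Lp M N p"
  using Lp_add[OF _ _ Lp_uminus, of M N Y p Z] by simp

lemma Lp_sum:
  assumes "subalgebra M N" "\<And>u. u \<in> A \<Longrightarrow> f u \<in> Lp M N p"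
  shows "(\<lambda>x. \<Sum>u\<in>A. f u x) \<in> Lp M N p"
  using assms(2)
proof (induction A rule: infinite_finite_induct)
  case (insert a A)
  then show ?case using Lp_add[OF assms(1)] by simp
qed (auto intro: Lp_zero)

lemma Lp_max_0: "subalgebra M N \<Longrightarrow> Y \<in> Lp M N p \<Longrightarrow> (\<lambda>x. max (Y x) 0) \<in> Lp M N p"
  by (erule Lp_dominated) (auto, measurable)

lemma Lp_min:
  assumes "subalgebra M N" "Y \<in> Lp M N p" "Z \<in> Lp M N p"
  shows "(\<lambda>x. min (Y x) (Z x)) \<in> Lp M N p"
proof (rule Lp_dominated[OF assms(1)])
  show "(\<lambda>x. \<bar>Y x\<bar> + \<bar>Z x\<bar>) \<in> Lp M N p"
    using assms by (intro Lp_add) (auto intro: Lp_dominated)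
qed (use assms in auto)

locale cost_of_capital =
  fixes M :: "'a measure" and F :: "nat \<Rightarrow> 'a measure" and T :: nat and p :: ennreal
    and R U :: "nat \<Rightarrow> ('a \<Rightarrow> real) \<Rightarrow> ('a \<Rightarrow> real)"
    and \<eta> :: "nat \<Rightarrow> 'a \<Rightarrow> real"
  assumes filtration: "finite_filtration M F T"
    and risk_measure: "dyn_risk_measure M F T p R"
    and utility: "dyn_utility M F T p U"
    and eta: "\<forall>t<T. \<eta> t \<in> borel_measurable (F t) \<and> (AE x in M. \<eta> t x > 0)"
begin

abbreviation L :: "nat \<Rightarrow> ('a \<Rightarrow> real) set" where
  "L k \<equiv> Lp M (F k) p"

abbreviation W :: "nat \<Rightarrow> ('a \<Rightarrow> real) \<Rightarrow> 'a \<Rightarrow> real" where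
  "W \<equiv> CoC_W R U \<eta>"

abbreviation V :: "(nat \<Rightarrow> 'a \<Rightarrow> real) \<Rightarrow> nat \<Rightarrow> 'a \<Rightarrow> real" where
  "V \<equiv> CoC_V R U \<eta> T"

lemma subalgebra_F: "k \<le> T \<Longrightarrow> subalgebra M (F k)"
  using filtration unfolding finite_filtration_def subalgebra_def by simp

lemma subalgebra_F_mono: "k \<le> j \<Longrightarrow> j \<le> T \<Longrightarrow> subalgebra (F j) (F k)"
  using filtration unfolding finite_filtration_def subalgebra_def by (metis le_trans)

lemma L_mono: "k \<le> j \<Longrightarrow> j \<le> T \<Longrightarrow> Y \<in> L k \<Longrightarrow> Y \<in> L j"
  using Lp_subalgebra_mono subalgebra_F_mono by blast

lemma L_pos_mono: "k \<le> j \<Longrightarrow> j \<le> T \<Longrightarrow> a \<in> Lp_pos M (F k) p \<Longrightarrow> a \<in> Lp_pos M (F j) p"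
  unfolding Lp_pos_def using L_mono by blast

lemma R_L: "t < T \<Longrightarrow> Y \<in> L (Suc t) \<Longrightarrow> R t Y \<in> L t"
  using risk_measure unfolding dyn_risk_measure_def by blast

lemma R_translation:
  "t < T \<Longrightarrow> Y \<in> L (Suc t) \<Longrightarrow> c \<in> L t \<Longrightarrow> AE x in M. R t (\<lambda>y. Y y + c y) x = R t Y x - c x"
  using risk_measure unfolding dyn_risk_measure_def by blast

lemma R_antimono:
  "t < T \<Longrightarrow> Y \<in> L (Suc t) \<Longrightarrow> Y' \<in> L (Suc t) \<Longrightarrow> AE x in M. Y x \<le> Y' x
    \<Longrightarrow> AE x in M. R t Y' x \<le> R t Y x"
  using risk_measure unfolding dyn_risk_measure_def by blast

lemma R_pos_homogeneous:
  "t < T \<Longrightarrow> Y \<in> L (Suc t) \<Longrightarrow> c \<in> Lp_pos M (F t) p \<Longrightarrow> (\<lambda>y. c y * Y y) \<in> L (Suc t)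
    \<Longrightarrow> AE x in M. R t (\<lambda>y. c y * Y y) x = c x * R t Y x"
  using risk_measure unfolding dyn_risk_measure_def by blast

lemma U_L: "t < T \<Longrightarrow> Y \<in> L (Suc t) \<Longrightarrow> U t Y \<in> L t"
  using utility unfolding dyn_utility_def by blast

lemma U_translation:
  "t < T \<Longrightarrow> Y \<in> L (Suc t) \<Longrightarrow> c \<in> L t \<Longrightarrow> AE x in M. U t (\<lambda>y. Y y + c y) x = U t Y x + c x"
  using utility unfolding dyn_utility_def by blast

lemma U_mono:
  "t < T \<Longrightarrow> Y \<in> L (Suc t) \<Longrightarrow> Y' \<in> L (Suc t) \<Longrightarrow> AE x in M. Y x \<le> Y' x
    \<Longrightarrow> AE x in M. U t Y x \<le> U t Y' x"
  using utility unfolding dyn_utility_def by blast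

lemma U_pos_homogeneous:
  "t < T \<Longrightarrow> Y \<in> L (Suc t) \<Longrightarrow> c \<in> Lp_pos M (F t) p \<Longrightarrow> (\<lambda>y. c y * Y y) \<in> L (Suc t)
    \<Longrightarrow> AE x in M. U t (\<lambda>y. c y * Y y) x = c x * U t Y x"
  using utility unfolding dyn_utility_def by blast

lemma U_AE_cong:
  assumes "t < T" "Y \<in> L (Suc t)" "Y' \<in> L (Suc t)" "AE x in M. Y x = Y' x"
  shows "AE x in M. U t Y x = U t Y' x"
proof -
  have "AE x in M. U t Y x \<le> U t Y' x"
    using assms by (intro U_mono) (auto elim: eventually_mono)
  moreover have "AE x in M. U t Y' x \<le> U t Y x"
    using assms by (intro U_mono) (auto elim: eventually_mono)
  ultimately show ?thesis by eventually_elim auto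
qed

definition returned_capital :: "nat \<Rightarrow> ('a \<Rightarrow> real) \<Rightarrow> 'a \<Rightarrow> real" where
  "returned_capital t Y = (\<lambda>y. max (R t (\<lambda>z. - Y z) y - Y y) 0)"

lemma W_eq: "W t Y = (\<lambda>x. R t (\<lambda>y. - Y y) x - 1 / (1 + \<eta> t x) * U t (returned_capital t Y) x)"
  unfolding CoC_W_def returned_capital_def ..

lemma capital_L:
  assumes "t < T" "Y \<in> L (Suc t)"
  shows "R t (\<lambda>y. - Y y) \<in> L t" and "R t (\<lambda>y. - Y y) \<in> L (Suc t)"
proof -
  show "R t (\<lambda>y. - Y y) \<in> L t"
    using assms by (intro R_L Lp_uminus)
  then show "R t (\<lambda>y. - Y y) \<in> L (Suc t)"
    using assms L_mono[of t "Suc t"] by simp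
qed

lemma returned_capital_L: "t < T \<Longrightarrow> Y \<in> L (Suc t) \<Longrightarrow> returned_capital t Y \<in> L (Suc t)"
  unfolding returned_capital_def by (intro Lp_max_0 Lp_diff capital_L subalgebra_F) auto

lemma W_L:
  assumes t: "t < T" and Y: "Y \<in> L (Suc t)"
  shows "W t Y \<in> L t"
proof -
  have UY: "U t (returned_capital t Y) \<in> L t"
    using U_L[OF t returned_capital_L[OF t Y]] .
  have "(\<lambda>x. 1 / (1 + \<eta> t x) * U t (returned_capital t Y) x) \<in> L t"
  proof (rule Lp_dominated[OF subalgebra_F _ UY])
    show "(\<lambda>x. 1 / (1 + \<eta> t x) * U t (returned_capital t Y) x) \<in> borel_measurable (F t)"
    proof -
      have "\<eta> t \<in> borel_measurable (F t)"
        using eta t by blast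
      then show ?thesis
        using Lp_measurable[OF UY] by measurable
    qed
    show "AE x in M. \<bar>1 / (1 + \<eta> t x) * U t (returned_capital t Y) x\<bar>
        \<le> \<bar>U t (returned_capital t Y) x\<bar>"
      using eta t by (auto elim!: eventually_mono simp: divide_le_eq mult_le_cancel_left1)
  qed (use t in simp)
  then show ?thesis
    unfolding W_eq using t capital_L[OF t Y] by (intro Lp_diff subalgebra_F) auto
qed

lemma W_mono:
  assumes t: "t < T" and Y: "Y \<in> L (Suc t)" and Y': "Y' \<in> L (Suc t)"
    and le: "AE x in M. Y x \<le> Y' x"
  shows "AE x in M. W t Y x \<le> W t Y' x"
proof -
  define Z where "Z = R t (\<lambda>y. - Y y)"
  define Z' where "Z' = R t (\<lambda>y. - Y' y)"
  have Z: "Z \<in> L t" "Z \<in> L (Suc t)" and Z': "Z' \<in> L t" "Z' \<in> L (Suc t)"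
    unfolding Z_def Z'_def using capital_L t Y Y' by auto
  have "AE x in M. - Y' x \<le> - Y x"
    using le by eventually_elim simp
  then have ZZ': "AE x in M. Z x \<le> Z' x"
    unfolding Z_def Z'_def using R_antimono[OF t Lp_uminus[OF Y'] Lp_uminus[OF Y]] by simp
  \<comment> \<open>Since max (Z - Y) 0 = Z - min Y Z, translation invariance of U t pulls Z out of the
    second term of W t Y, leaving (1 - k) Z - k U t (- min Y Z) with k = 1 / (1 + \<eta> t),
    which is nondecreasing in both Y and Z.\<close>
  define m where "m = (\<lambda>y. - min (Y y) (Z y))"
  define m' where "m' = (\<lambda>y. - min (Y' y) (Z' y))"
  have m: "m \<in> L (Suc t)" and m': "m' \<in> L (Suc t)"
    unfolding m_def m'_def using Y Y' Z Z' t by (auto intro!: Lp_uminus Lp_min subalgebra_F)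
  have "returned_capital t Y = (\<lambda>y. m y + Z y)"
    unfolding returned_capital_def m_def Z_def by (auto simp: max_def min_def)
  then have UY: "AE x in M. U t (returned_capital t Y) x = U t m x + Z x"
    using U_translation[OF t m Z(1)] by simp
  have "returned_capital t Y' = (\<lambda>y. m' y + Z' y)"
    unfolding returned_capital_def m'_def Z'_def by (auto simp: max_def min_def)
  then have UY': "AE x in M. U t (returned_capital t Y') x = U t m' x + Z' x"
    using U_translation[OF t m' Z'(1)] by simp
  have "AE x in M. m' x \<le> m x"
    using le ZZ' unfolding m_def m'_def by eventually_elim auto
  then have Umm': "AE x in M. U t m' x \<le> U t m x"
    using U_mono[OF t m' m] by simp
  have "AE x in M. \<eta> t x > 0"
    using eta t by auto
  then show ?thesis
    using UY UY' Umm' ZZ' unfolding W_eq Z_def[symmetric] Z'_def[symmetric]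
  proof eventually_elim
    case (elim x)
    define k where "k = 1 / (1 + \<eta> t x)"
    have k: "0 \<le> k" "k \<le> 1"
      using elim(1) unfolding k_def by auto
    have "k * ((U t m' x - U t m x) + (Z' x - Z x)) \<le> k * (Z' x - Z x)"
      using elim(4) k by (simp add: mult_left_mono)
    also have "\<dots> \<le> Z' x - Z x"
      using k elim(5) by (intro mult_left_le_one_le) auto
    finally show ?case
      unfolding elim(2,3) k_def[symmetric] by (simp add: algebra_simps)
  qed
qed

lemma W_AE_cong:
  assumes "t < T" "Y \<in> L (Suc t)" "Y' \<in> L (Suc t)" "AE x in M. Y x = Y' x"
  shows "AE x in M. W t Y x = W t Y' x"
proof -
  have "AE x in M. W t Y x \<le> W t Y' x"
    using assms by (intro W_mono) (auto elim: eventually_mono)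
  moreover have "AE x in M. W t Y' x \<le> W t Y x"
    using assms by (intro W_mono) (auto elim: eventually_mono)
  ultimately show ?thesis by eventually_elim auto
qed

lemma W_translation:
  assumes t: "t < T" and Y: "Y \<in> L (Suc t)" and Z: "Z \<in> L (Suc t)" and c: "c \<in> L t"
    and Z_eq: "AE x in M. Z x = Y x + c x"
  shows "AE x in M. W t Z x = W t Y x + c x"
proof -
  have Yc: "(\<lambda>y. Y y + c y) \<in> L (Suc t)"
    using t Y c L_mono[of t "Suc t"] by (intro Lp_add subalgebra_F) auto
  have capital: "AE x in M. R t (\<lambda>y. - (Y y + c y)) x = R t (\<lambda>y. - Y y) x + c x"
    using R_translation[OF t Lp_uminus[OF Y] Lp_uminus[OF c]] by simp
  then have "AE x in M. returned_capital t (\<lambda>y. Y y + c y) x = returned_capital t Y x"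
    unfolding returned_capital_def by eventually_elim simp
  then have "AE x in M. U t (returned_capital t (\<lambda>y. Y y + c y)) x = U t (returned_capital t Y) x"
    using U_AE_cong[OF t returned_capital_L[OF t Yc] returned_capital_L[OF t Y]] by simp
  with W_AE_cong[OF t Z Yc Z_eq] capital show ?thesis
    unfolding W_eq by eventually_elim (simp add: algebra_simps)
qed

lemma W_pos_homogeneous:
  assumes t: "t < T" and Y: "Y \<in> L (Suc t)" and Z: "Z \<in> L (Suc t)"
    and a: "a \<in> Lp_pos M (F t) p" and Z_eq: "AE x in M. Z x = a x * Y x"
  shows "AE x in M. W t Z x = a x * W t Y x"
proof -
  have aL: "a \<in> L (Suc t)" and a_nonneg: "AE x in M. 0 \<le> a x"
    using a t L_mono[of t "Suc t"] unfolding Lp_pos_def by auto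
  have aY: "(\<lambda>y. a y * Y y) \<in> L (Suc t)"
    using Z_eq aL Y t by (intro Lp_AE_cong[OF subalgebra_F _ Z]) (auto elim!: eventually_mono)
  have capital: "AE x in M. R t (\<lambda>y. - (a y * Y y)) x = a x * R t (\<lambda>y. - Y y) x"
    using R_pos_homogeneous[OF t Lp_uminus[OF Y] a] Lp_uminus[OF aY] by simp
  have ret: "AE x in M. returned_capital t (\<lambda>y. a y * Y y) x = a x * returned_capital t Y x"
    using capital a_nonneg unfolding returned_capital_def
    by eventually_elim (simp add: max_mult_distrib_left right_diff_distrib)
  have a_ret: "(\<lambda>x. a x * returned_capital t Y x) \<in> L (Suc t)"
    using ret aL returned_capital_L[OF t Y] t
    by (intro Lp_AE_cong[OF subalgebra_F _ returned_capital_L[OF t aY]])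
       (auto elim!: eventually_mono)
  have "AE x in M. U t (returned_capital t (\<lambda>y. a y * Y y)) x = a x * U t (returned_capital t Y) x"
    using U_AE_cong[OF t returned_capital_L[OF t aY] a_ret ret]
      U_pos_homogeneous[OF t returned_capital_L[OF t Y] a a_ret]
    by eventually_elim simp
  with W_AE_cong[OF t Z aY Z_eq] capital show ?thesis
    unfolding W_eq by eventually_elim (simp add: algebra_simps)
qed

definition W_iter :: "nat \<Rightarrow> ('a \<Rightarrow> real) \<Rightarrow> 'a \<Rightarrow> real" where
  "W_iter k Y = foldr W [k..<T] Y"

lemma W_iter_T [simp]: "W_iter T Y = Y"
  unfolding W_iter_def by simp

lemma W_iter_step: "k < T \<Longrightarrow> W_iter k Y = W k (W_iter (Suc k) Y)"
  unfolding W_iter_def by (simp add: upt_conv_Cons)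

lemma W_iter_L:
  assumes "Y \<in> L T" "k \<le> T"
  shows "W_iter k Y \<in> L k"
  using assms(2)
proof (induction rule: inc_induct)
  case (step n)
  then show ?case by (simp add: W_iter_step W_L)
qed (simp add: assms(1))

lemma W_iter_mono:
  assumes Y: "Y \<in> L T" and Y': "Y' \<in> L T" and le: "AE x in M. Y x \<le> Y' x" and k: "k \<le> T"
  shows "AE x in M. W_iter k Y x \<le> W_iter k Y' x"
  using k
proof (induction rule: inc_induct)
  case (step n)
  then show ?case
    using W_mono[OF _ W_iter_L[OF Y] W_iter_L[OF Y']] by (simp add: W_iter_step)
qed (simp add: le)

lemma W_iter_translation:
  assumes k: "k \<le> T" and Y: "Y \<in> L T" and c: "c \<in> L k"
  shows "AE x in M. W_iter k (\<lambda>y. Y y + c y) x = W_iter k Y x + c x"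
  using k
proof (induction rule: inc_induct)
  case (step n)
  have n: "n < T" and cn: "c \<in> L n"
    using step.hyps k c L_mono by auto
  have "(\<lambda>y. Y y + c y) \<in> L T"
    using Y c k L_mono by (intro Lp_add subalgebra_F) auto
  then show ?case
    unfolding W_iter_step[OF n]
    using W_translation[OF n W_iter_L[OF Y] W_iter_L cn step.IH] n by simp
qed simp

lemma W_iter_pos_homogeneous:
  assumes k: "k \<le> T" and Y: "Y \<in> L T" and a: "a \<in> Lp_pos M (F k) p"
    and aY: "(\<lambda>y. a y * Y y) \<in> L T"
  shows "AE x in M. W_iter k (\<lambda>y. a y * Y y) x = a x * W_iter k Y x"
  using k
proof (induction rule: inc_induct)
  case (step n)
  have n: "n < T" and an: "a \<in> Lp_pos M (F n) p"
    using step.hyps a L_pos_mono by auto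
  show ?case
    unfolding W_iter_step[OF n]
    using W_pos_homogeneous[OF n W_iter_L[OF Y] W_iter_L[OF aY] an step.IH] n by simp
qed simp

definition adapted :: "(nat \<Rightarrow> 'a \<Rightarrow> real) \<Rightarrow> bool" where
  "adapted X \<longleftrightarrow> (\<forall>s\<in>{1..T}. X s \<in> L s)"

definition cash_flow_after :: "nat \<Rightarrow> (nat \<Rightarrow> 'a \<Rightarrow> real) \<Rightarrow> 'a \<Rightarrow> real" where
  "cash_flow_after t X = (\<lambda>x. \<Sum>u\<in>{Suc t..T}. X u x)"

lemma V_eq_W_iter: "V X t = W_iter t (cash_flow_after t X)"
  unfolding CoC_V_def W_iter_def cash_flow_after_def ..

lemma cash_flow_after_L: "adapted X \<Longrightarrow> cash_flow_after t X \<in> L T"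
  unfolding adapted_def cash_flow_after_def by (intro Lp_sum subalgebra_F) (auto intro: L_mono)

lemma V_L: "adapted X \<Longrightarrow> t \<le> T \<Longrightarrow> V X t \<in> L t"
  unfolding V_eq_W_iter by (intro W_iter_L cash_flow_after_L)

lemma V_recursion:
  assumes k: "k < T" and X: "adapted X"
  shows "AE x in M. V X k x = W k (\<lambda>y. V X (Suc k) y + X (Suc k) y) x"
proof -
  have Xk: "X (Suc k) \<in> L (Suc k)"
    using X k unfolding adapted_def by auto
  have "cash_flow_after k X = (\<lambda>y. cash_flow_after (Suc k) X y + X (Suc k) y)"
    unfolding cash_flow_after_def using k by (simp add: sum.atLeast_Suc_atMost add.commute)
  then have "AE x in M. W_iter (Suc k) (cash_flow_after k X) x = V X (Suc k) x + X (Suc k) x"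
    unfolding V_eq_W_iter using W_iter_translation[OF _ cash_flow_after_L[OF X] Xk] k by simp
  moreover have "(\<lambda>y. V X (Suc k) y + X (Suc k) y) \<in> L (Suc k)"
    using V_L[OF X] Xk k by (intro Lp_add subalgebra_F) auto
  ultimately show ?thesis
    unfolding V_eq_W_iter W_iter_step[OF k]
    using W_AE_cong W_iter_L[OF cash_flow_after_L[OF X]] k by simp
qed

lemma V_pos_homogeneous:
  assumes t: "t \<le> T" and X: "adapted X" and a: "a \<in> Lp_pos M (F t) p"
    and aX: "\<forall>u\<in>{1..T}. (\<lambda>x. a x * X u x) \<in> L u"
  shows "AE x in M. V (\<lambda>u y. a y * X u y) t x = a x * V X t x"
proof -
  have "cash_flow_after t (\<lambda>u y. a y * X u y) = (\<lambda>y. a y * cash_flow_after t X y)"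
    unfolding cash_flow_after_def by (simp add: sum_distrib_left)
  moreover have "cash_flow_after t (\<lambda>u y. a y * X u y) \<in> L T"
    using aX by (intro cash_flow_after_L) (simp add: adapted_def)
  ultimately show ?thesis
    unfolding V_eq_W_iter using W_iter_pos_homogeneous[OF t cash_flow_after_L[OF X] a] by simp
qed

lemma V_translation:
  assumes t: "t \<le> T" and X: "adapted X" and b: "\<forall>u\<in>{1..T}. b u \<in> L t"
  shows "AE x in M. V (\<lambda>u y. X u y + b u y) t x = V X t x + (\<Sum>u\<in>{Suc t..T}. b u x)"
proof -
  have "cash_flow_after t (\<lambda>u y. X u y + b u y)
      = (\<lambda>y. cash_flow_after t X y + (\<Sum>u\<in>{Suc t..T}. b u y))"
    unfolding cash_flow_after_def by (simp add: sum.distrib)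
  moreover have "(\<lambda>y. \<Sum>u\<in>{Suc t..T}. b u y) \<in> L t"
    using b t by (intro Lp_sum subalgebra_F) auto
  ultimately show ?thesis
    unfolding V_eq_W_iter using W_iter_translation[OF t cash_flow_after_L[OF X]] by simp
qed

lemma V_mono:
  assumes t: "t \<le> T" and X: "adapted X" and X': "adapted X'"
    and le: "\<forall>u\<in>{1..T}. AE x in M. X u x \<le> X' u x"
  shows "AE x in M. V X t x \<le> V X' t x"
proof -
  have "AE x in M. \<forall>u\<in>{1..T}. X u x \<le> X' u x"
    using le by (intro AE_finite_allI) auto
  then have "AE x in M. cash_flow_after t X x \<le> cash_flow_after t X' x"
    unfolding cash_flow_after_def by eventually_elim (auto intro!: sum_mono)
  then show ?thesis
    unfolding V_eq_W_iter using W_iter_mono[OF cash_flow_after_L[OF X] cash_flow_after_L[OF X'] _ t]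
    by simp
qed

lemma V_time_consistent:
  assumes "s \<le> t" and t: "t \<le> T" and X: "adapted X" and X': "adapted X'"
    and eq: "\<forall>u\<in>{1..t}. AE x in M. X u x = X' u x"
    and le: "AE x in M. V X t x \<le> V X' t x"
  shows "AE x in M. V X s x \<le> V X' s x"
  using assms(1)
proof (induction rule: inc_induct)
  case (step n)
  have n: "n < T"
    using step.hyps t by simp
  have "AE x in M. X (Suc n) x = X' (Suc n) x"
    using eq step.hyps by auto
  with step.IH have "AE x in M. V X (Suc n) x + X (Suc n) x \<le> V X' (Suc n) x + X' (Suc n) x"
    by eventually_elim simp
  moreover have "(\<lambda>y. V Z (Suc n) y + Z (Suc n) y) \<in> L (Suc n)" if "adapted Z" for Z
    using that V_L[OF that] n unfolding adapted_def by (intro Lp_add subalgebra_F) auto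
  ultimately have "AE x in M. W n (\<lambda>y. V X (Suc n) y + X (Suc n) y) x
      \<le> W n (\<lambda>y. V X' (Suc n) y + X' (Suc n) y) x"
    using W_mono[OF n] X X' by blast
  with V_recursion[OF n X] V_recursion[OF n X'] show ?case
    by eventually_elim simp
qed (rule le)

end

theorem proposition2:
  fixes M :: "'a measure" and F :: "nat \<Rightarrow> 'a measure" and T :: nat and p :: ennreal
    and R U :: "nat \<Rightarrow> ('a \<Rightarrow> real) \<Rightarrow> ('a \<Rightarrow> real)"
    and \<eta> :: "nat \<Rightarrow> 'a \<Rightarrow> real"
    and X X' :: "nat \<Rightarrow> 'a \<Rightarrow> real"
  assumes "prob_space M"
    and "T \<ge> 1"
    and "finite_filtration M F T"
    and "dyn_risk_measure M F T p R"
    and "dyn_utility M F T p U"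
    and "\<forall>t<T. \<eta> t \<in> borel_measurable (F t) \<and> (AE x in M. \<eta> t x > 0)"
    and "\<forall>s\<in>{1..T}. X s \<in> Lp M (F s) p"
    and "\<forall>s\<in>{1..T}. X' s \<in> Lp M (F s) p"
  shows
    "(\<forall>t<T.
        (\<forall>a\<in>Lp_pos M (F t) p.
           (\<forall>u\<in>{1..T}. (\<lambda>x. a x * X u x) \<in> Lp M (F u) p) \<longrightarrow>
           (AE x in M. CoC_V R U \<eta> T (\<lambda>u y. a y * X u y) t x = a x * CoC_V R U \<eta> T X t x)) \<and>
        (\<forall>b. (\<forall>u\<in>{1..T}. b u \<in> Lp M (F t) p) \<longrightarrow>
           (AE x in M. CoC_V R U \<eta> T (\<lambda>u y. X u y + b u y) t x
                        = CoC_V R U \<eta> T X t x + (\<Sum>u\<in>{Suc t..T}. b u x))) \<and>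
        ((\<forall>u\<in>{1..T}. AE x in M. X u x \<le> X' u x) \<longrightarrow>
           (AE x in M. CoC_V R U \<eta> T X t x \<le> CoC_V R U \<eta> T X' t x)))
     \<and>
     (\<forall>s t. s \<le> t \<and> t \<le> T \<and>
        (\<forall>u\<in>{1..t}. AE x in M. X u x = X' u x) \<and>
        (AE x in M. CoC_V R U \<eta> T X t x \<le> CoC_V R U \<eta> T X' t x) \<longrightarrow>
        (AE x in M. CoC_V R U \<eta> T X s x \<le> CoC_V R U \<eta> T X' s x))"
proof -
  interpret cost_of_capital M F T p R U \<eta>
    using assms(3-6) by unfold_locales
  have X: "adapted X" and X': "adapted X'"
    using assms(7,8) unfolding adapted_def by auto
  show ?thesis
    using V_pos_homogeneous[OF _ X] V_translation[OF _ X] V_mono[OF _ X X']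
      V_time_consistent[OF _ _ X X'] by (blast intro: less_imp_le)
qed

end
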